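(* Let $\mathcal C$ be a pointed exact Mal'tsev category and let $(C_1,C_0,d,c,e)$ be a reflexive graph in $\mathcal C$. Then the pushout of $d$ and $c$ exists, and $(d,c)\colon C_1\to C_0\times C_0$ is an epimorphism if and only if this pushout $\pi_0(C)$ is a zero object. Moreover, in that case $(d,c)$ is a regular epimorphism.
   Context: A reflexive graph $(C_1,C_0,d,c,e)$ consists of morphisms $d,c\colon C_1\to C_0$ and $e\colon C_0\to C_1$ with $d\circ e=c\circ e=1_{C_0}$. A Mal'tsev category is a finitely complete category in which every reflexive relation is an equivalence relation; exact means Barr-exact. *)

theory Defs
  imports Main
begin

text \<open>An (elementary) category: objects of type 'o, arrows of type 'a.
  Cp C g f is the composite "g after f".\<close>

record ('o, 'a) cat =
  Obj :: "'o set"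
  Arr :: "'a set"
  Dom :: "'a \<Rightarrow> 'o"
  Cod :: "'a \<Rightarrow> 'o"
  Cp  :: "'a \<Rightarrow> 'a \<Rightarrow> 'a"
  Idt :: "'o \<Rightarrow> 'a"

definition hom :: "('o,'a) cat \<Rightarrow> 'o \<Rightarrow> 'o \<Rightarrow> 'a set" where
  "hom C X Y = {f \<in> Arr C. Dom C f = X \<and> Cod C f = Y}"

definition is_category :: "('o,'a) cat \<Rightarrow> bool" where
  "is_category C \<longleftrightarrow>
     (\<forall>f \<in> Arr C. Dom C f \<in> Obj C \<and> Cod C f \<in> Obj C) \<and>
     (\<forall>X \<in> Obj C. Idt C X \<in> hom C X X) \<and>
     (\<forall>f \<in> Arr C. \<forall>g \<in> Arr C. Cod C f = Dom C g \<longrightarrow>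
         Cp C g f \<in> hom C (Dom C f) (Cod C g)) \<and>
     (\<forall>f \<in> Arr C. Cp C f (Idt C (Dom C f)) = f \<and> Cp C (Idt C (Cod C f)) f = f) \<and>
     (\<forall>f \<in> Arr C. \<forall>g \<in> Arr C. \<forall>h \<in> Arr C.
         Cod C f = Dom C g \<longrightarrow> Cod C g = Dom C h \<longrightarrow>
         Cp C h (Cp C g f) = Cp C (Cp C h g) f)"

definition is_terminal :: "('o,'a) cat \<Rightarrow> 'o \<Rightarrow> bool" where
  "is_terminal C T \<longleftrightarrow> T \<in> Obj C \<and> (\<forall>X \<in> Obj C. \<exists>!f. f \<in> hom C X T)"

definition is_initial :: "('o,'a) cat \<Rightarrow> 'o \<Rightarrow> bool" where
  "is_initial C I \<longleftrightarrow> I \<in> Obj C \<and> (\<forall>X \<in> Obj C. \<exists>!f. f \<in> hom C I X)"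

definition zero_object :: "('o,'a) cat \<Rightarrow> 'o \<Rightarrow> bool" where
  "zero_object C Z \<longleftrightarrow> is_initial C Z \<and> is_terminal C Z"

definition pointed :: "('o,'a) cat \<Rightarrow> bool" where
  "pointed C \<longleftrightarrow> (\<exists>Z. zero_object C Z)"

definition monic :: "('o,'a) cat \<Rightarrow> 'a \<Rightarrow> bool" where
  "monic C m \<longleftrightarrow> m \<in> Arr C \<and>
     (\<forall>x \<in> Arr C. \<forall>y \<in> Arr C. Cod C x = Dom C m \<longrightarrow> Cod C y = Dom C m \<longrightarrow>
        Dom C x = Dom C y \<longrightarrow> Cp C m x = Cp C m y \<longrightarrow> x = y)"

definition epi :: "('o,'a) cat \<Rightarrow> 'a \<Rightarrow> bool" where
  "epi C q \<longleftrightarrow> q \<in> Arr C \<and>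
     (\<forall>x \<in> Arr C. \<forall>y \<in> Arr C. Dom C x = Cod C q \<longrightarrow> Dom C y = Cod C q \<longrightarrow>
        Cod C x = Cod C y \<longrightarrow> Cp C x q = Cp C y q \<longrightarrow> x = y)"

definition is_product :: "('o,'a) cat \<Rightarrow> 'o \<Rightarrow> 'o \<Rightarrow> 'o \<Rightarrow> 'a \<Rightarrow> 'a \<Rightarrow> bool" where
  "is_product C A B P p1 p2 \<longleftrightarrow> p1 \<in> hom C P A \<and> p2 \<in> hom C P B \<and>
     (\<forall>X \<in> Obj C. \<forall>f \<in> hom C X A. \<forall>g \<in> hom C X B.
        \<exists>!u. u \<in> hom C X P \<and> Cp C p1 u = f \<and> Cp C p2 u = g)"

definition is_pullback :: "('o,'a) cat \<Rightarrow> 'a \<Rightarrow> 'a \<Rightarrow> 'o \<Rightarrow> 'a \<Rightarrow> 'a \<Rightarrow> bool" where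
  "is_pullback C f g P p1 p2 \<longleftrightarrow> f \<in> Arr C \<and> g \<in> Arr C \<and> Cod C f = Cod C g \<and>
     p1 \<in> hom C P (Dom C f) \<and> p2 \<in> hom C P (Dom C g) \<and> Cp C f p1 = Cp C g p2 \<and>
     (\<forall>X \<in> Obj C. \<forall>x \<in> hom C X (Dom C f). \<forall>y \<in> hom C X (Dom C g).
        Cp C f x = Cp C g y \<longrightarrow>
        (\<exists>!u. u \<in> hom C X P \<and> Cp C p1 u = x \<and> Cp C p2 u = y))"

definition is_pushout :: "('o,'a) cat \<Rightarrow> 'a \<Rightarrow> 'a \<Rightarrow> 'o \<Rightarrow> 'a \<Rightarrow> 'a \<Rightarrow> bool" where
  "is_pushout C f g Q i1 i2 \<longleftrightarrow> f \<in> Arr C \<and> g \<in> Arr C \<and> Dom C f = Dom C g \<and>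
     i1 \<in> hom C (Cod C f) Q \<and> i2 \<in> hom C (Cod C g) Q \<and> Cp C i1 f = Cp C i2 g \<and>
     (\<forall>X \<in> Obj C. \<forall>x \<in> hom C (Cod C f) X. \<forall>y \<in> hom C (Cod C g) X.
        Cp C x f = Cp C y g \<longrightarrow>
        (\<exists>!u. u \<in> hom C Q X \<and> Cp C u i1 = x \<and> Cp C u i2 = y))"

definition is_coequalizer :: "('o,'a) cat \<Rightarrow> 'a \<Rightarrow> 'a \<Rightarrow> 'a \<Rightarrow> bool" where
  "is_coequalizer C f g q \<longleftrightarrow> f \<in> Arr C \<and> g \<in> Arr C \<and>
     Dom C f = Dom C g \<and> Cod C f = Cod C g \<and>
     q \<in> Arr C \<and> Dom C q = Cod C f \<and> Cp C q f = Cp C q g \<and>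
     (\<forall>h \<in> Arr C. Dom C h = Cod C f \<longrightarrow> Cp C h f = Cp C h g \<longrightarrow>
        (\<exists>!u. u \<in> hom C (Cod C q) (Cod C h) \<and> Cp C u q = h))"

definition regular_epi :: "('o,'a) cat \<Rightarrow> 'a \<Rightarrow> bool" where
  "regular_epi C q \<longleftrightarrow> (\<exists>f g. is_coequalizer C f g q)"

definition finitely_complete :: "('o,'a) cat \<Rightarrow> bool" where
  "finitely_complete C \<longleftrightarrow> (\<exists>T. is_terminal C T) \<and>
     (\<forall>f \<in> Arr C. \<forall>g \<in> Arr C. Cod C f = Cod C g \<longrightarrow> (\<exists>P p1 p2. is_pullback C f g P p1 p2))"

definition is_relation :: "('o,'a) cat \<Rightarrow> 'o \<Rightarrow> 'o \<Rightarrow> 'a \<Rightarrow> 'a \<Rightarrow> bool" where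
  "is_relation C X R r1 r2 \<longleftrightarrow> r1 \<in> hom C R X \<and> r2 \<in> hom C R X \<and>
     (\<forall>x \<in> Arr C. \<forall>y \<in> Arr C. Cod C x = R \<longrightarrow> Cod C y = R \<longrightarrow> Dom C x = Dom C y \<longrightarrow>
        Cp C r1 x = Cp C r1 y \<longrightarrow> Cp C r2 x = Cp C r2 y \<longrightarrow> x = y)"

definition reflexive_rel :: "('o,'a) cat \<Rightarrow> 'o \<Rightarrow> 'o \<Rightarrow> 'a \<Rightarrow> 'a \<Rightarrow> bool" where
  "reflexive_rel C X R r1 r2 \<longleftrightarrow> is_relation C X R r1 r2 \<and>
     (\<exists>s \<in> hom C X R. Cp C r1 s = Idt C X \<and> Cp C r2 s = Idt C X)"

definition symmetric_rel :: "('o,'a) cat \<Rightarrow> 'o \<Rightarrow> 'o \<Rightarrow> 'a \<Rightarrow> 'a \<Rightarrow> bool" where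
  "symmetric_rel C X R r1 r2 \<longleftrightarrow> is_relation C X R r1 r2 \<and>
     (\<forall>T \<in> Obj C. \<forall>x \<in> hom C T R. \<exists>z \<in> hom C T R.
        Cp C r1 z = Cp C r2 x \<and> Cp C r2 z = Cp C r1 x)"

definition transitive_rel :: "('o,'a) cat \<Rightarrow> 'o \<Rightarrow> 'o \<Rightarrow> 'a \<Rightarrow> 'a \<Rightarrow> bool" where
  "transitive_rel C X R r1 r2 \<longleftrightarrow> is_relation C X R r1 r2 \<and>
     (\<forall>T \<in> Obj C. \<forall>x \<in> hom C T R. \<forall>y \<in> hom C T R. Cp C r2 x = Cp C r1 y \<longrightarrow>
        (\<exists>z \<in> hom C T R. Cp C r1 z = Cp C r1 x \<and> Cp C r2 z = Cp C r2 y))"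

definition equivalence_rel :: "('o,'a) cat \<Rightarrow> 'o \<Rightarrow> 'o \<Rightarrow> 'a \<Rightarrow> 'a \<Rightarrow> bool" where
  "equivalence_rel C X R r1 r2 \<longleftrightarrow> reflexive_rel C X R r1 r2 \<and>
     symmetric_rel C X R r1 r2 \<and> transitive_rel C X R r1 r2"

definition maltsev :: "('o,'a) cat \<Rightarrow> bool" where
  "maltsev C \<longleftrightarrow> finitely_complete C \<and>
     (\<forall>X R r1 r2. reflexive_rel C X R r1 r2 \<longrightarrow> equivalence_rel C X R r1 r2)"

definition kernel_pair :: "('o,'a) cat \<Rightarrow> 'a \<Rightarrow> 'o \<Rightarrow> 'a \<Rightarrow> 'a \<Rightarrow> bool" where
  "kernel_pair C f R r1 r2 \<longleftrightarrow> is_pullback C f f R r1 r2"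

definition regular_cat :: "('o,'a) cat \<Rightarrow> bool" where
  "regular_cat C \<longleftrightarrow> finitely_complete C \<and>
     (\<forall>f R r1 r2. kernel_pair C f R r1 r2 \<longrightarrow> (\<exists>q. is_coequalizer C r1 r2 q)) \<and>
     (\<forall>f g P p1 p2. regular_epi C f \<longrightarrow> is_pullback C f g P p1 p2 \<longrightarrow> regular_epi C p2)"

definition exact_cat :: "('o,'a) cat \<Rightarrow> bool" where
  "exact_cat C \<longleftrightarrow> regular_cat C \<and>
     (\<forall>X R r1 r2. equivalence_rel C X R r1 r2 \<longrightarrow> (\<exists>f. kernel_pair C f R r1 r2))"

end

theory Submission
  imports Defs
begin

text \<open>
  Factor \<open>u = (d, c) : C\<^sub>1 \<rightarrow> C\<^sub>0 \<times> C\<^sub>0\<close> as a regular epi \<open>p\<close> followed by a mono \<open>m\<close>.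
  The image \<open>(p\<^sub>1 m, p\<^sub>2 m)\<close> is a relation on \<open>C\<^sub>0\<close>, reflexive thanks to \<open>p e\<close>, hence an
  equivalence relation (Mal'tsev) and so the kernel pair of some \<open>f\<close> (exactness).
  A cocone \<open>x d = y c\<close> always has \<open>x = y\<close> (precompose with \<open>e\<close>), and \<open>p\<close> is epic, so the
  coequalizer of the image relation is the pushout of \<open>d\<close> and \<open>c\<close>.

  If \<open>u\<close> is epic, the pushout injection \<open>i\<close> satisfies \<open>i p\<^sub>1 = i p\<^sub>2\<close>; evaluating on
  \<open>(1, 0) : C\<^sub>0 \<rightarrow> C\<^sub>0 \<times> C\<^sub>0\<close> shows that \<open>i\<close> factors through the zero object, which makes
  the pushout initial and therefore zero. Conversely, if the pushout is zero then \<open>f\<close>, which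
  factors through it, identifies the two product projections; so the projections factor
  through the kernel pair of \<open>f\<close>, i.e. \<open>m\<close> is split epi as well as mono, hence an
  isomorphism, and \<open>u = m p\<close> is a regular epi.
\<close>

lemma ex1_unique: "\<exists>!x. P x \<Longrightarrow> P a \<Longrightarrow> P b \<Longrightarrow> a = b"
  by blast

locale category =
  fixes C :: "('o,'a) cat"
  assumes is_cat: "is_category C"
begin

abbreviation compose (infixr "\<cdot>" 55) where "g \<cdot> f \<equiv> Cp C g f"

lemma hom_iff: "f \<in> hom C A B \<longleftrightarrow> f \<in> Arr C \<and> Dom C f = A \<and> Cod C f = B"
  by (simp add: hom_def)

lemma Dom_Obj: "f \<in> Arr C \<Longrightarrow> Dom C f \<in> Obj C"
  and Cod_Obj: "f \<in> Arr C \<Longrightarrow> Cod C f \<in> Obj C"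
  using is_cat by (simp_all add: is_category_def)

lemma hom_Obj: "f \<in> hom C A B \<Longrightarrow> A \<in> Obj C \<and> B \<in> Obj C"
  using Dom_Obj Cod_Obj by (auto simp: hom_iff)

lemma Idt_hom: "X \<in> Obj C \<Longrightarrow> Idt C X \<in> hom C X X"
  using is_cat by (simp add: is_category_def)

lemma Arr_Idt [simp]: "X \<in> Obj C \<Longrightarrow> Idt C X \<in> Arr C"
  and Dom_Idt [simp]: "X \<in> Obj C \<Longrightarrow> Dom C (Idt C X) = X"
  and Cod_Idt [simp]: "X \<in> Obj C \<Longrightarrow> Cod C (Idt C X) = X"
  using Idt_hom by (simp_all add: hom_iff)

lemma Arr_Cp [simp]: "f \<in> Arr C \<Longrightarrow> g \<in> Arr C \<Longrightarrow> Cod C f = Dom C g \<Longrightarrow> g \<cdot> f \<in> Arr C"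
  and Dom_Cp [simp]: "f \<in> Arr C \<Longrightarrow> g \<in> Arr C \<Longrightarrow> Cod C f = Dom C g \<Longrightarrow> Dom C (g \<cdot> f) = Dom C f"
  and Cod_Cp [simp]: "f \<in> Arr C \<Longrightarrow> g \<in> Arr C \<Longrightarrow> Cod C f = Dom C g \<Longrightarrow> Cod C (g \<cdot> f) = Cod C g"
  using is_cat by (simp_all add: is_category_def hom_def)

lemma Cp_Idt [simp]: "f \<in> Arr C \<Longrightarrow> Dom C f = A \<Longrightarrow> f \<cdot> Idt C A = f"
  and Idt_Cp [simp]: "f \<in> Arr C \<Longrightarrow> Cod C f = B \<Longrightarrow> Idt C B \<cdot> f = f"
  using is_cat by (auto simp: is_category_def)

lemma Cp_assoc [simp]:
  "f \<in> Arr C \<Longrightarrow> g \<in> Arr C \<Longrightarrow> h \<in> Arr C \<Longrightarrow> Cod C f = Dom C g \<Longrightarrow> Cod C g = Dom C h \<Longrightarrow>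
    (h \<cdot> g) \<cdot> f = h \<cdot> g \<cdot> f"
  using is_cat by (simp add: is_category_def)

lemma Cp_hom: "f \<in> hom C A B \<Longrightarrow> g \<in> hom C B D \<Longrightarrow> g \<cdot> f \<in> hom C A D"
  by (simp add: hom_iff)

text \<open>
  The simp rules above normalise composites to right-nested form, so a hypothesis
  \<open>g \<cdot> f = g' \<cdot> f'\<close> only rewrites suffixes; the next lemma extends it by a common right factor.
\<close>

lemma precompose_eq:
  assumes "g \<cdot> f = g' \<cdot> f'" "h \<in> hom C X A" "f \<in> hom C A B" "g \<in> hom C B D"
    "f' \<in> hom C A B'" "g' \<in> hom C B' D"
  shows "g \<cdot> f \<cdot> h = g' \<cdot> f' \<cdot> h"
proof -
  from assms(1) have "(g \<cdot> f) \<cdot> h = (g' \<cdot> f') \<cdot> h"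
    by (rule arg_cong)
  then show ?thesis
    using assms(2-6) by (simp add: hom_iff)
qed

lemma epiI:
  assumes "q \<in> hom C A B"
    and "\<And>X x y. x \<in> hom C B X \<Longrightarrow> y \<in> hom C B X \<Longrightarrow> x \<cdot> q = y \<cdot> q \<Longrightarrow> x = y"
  shows "epi C q"
  unfolding epi_def
proof (intro conjI ballI impI)
  show "q \<in> Arr C"
    using assms(1) by (simp add: hom_iff)
  fix x y assume "x \<in> Arr C" "y \<in> Arr C" "Dom C x = Cod C q" "Dom C y = Cod C q"
    "Cod C x = Cod C y" "x \<cdot> q = y \<cdot> q"
  then show "x = y"
    by (intro assms(2)[of x "Cod C x" y]) (use assms(1) in \<open>simp_all add: hom_iff\<close>)
qed

lemma epiD:
  assumes "epi C q" "q \<in> hom C A B" "x \<in> hom C B X" "y \<in> hom C B X" "x \<cdot> q = y \<cdot> q"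
  shows "x = y"
proof -
  have "x \<in> Arr C" "y \<in> Arr C" "Dom C x = Cod C q" "Dom C y = Cod C q" "Cod C x = Cod C y"
    using assms(2-4) by (simp_all add: hom_iff)
  then show ?thesis
    using assms(1,5) unfolding epi_def by blast
qed

lemma monicI:
  assumes "m \<in> hom C A B"
    and "\<And>T x y. x \<in> hom C T A \<Longrightarrow> y \<in> hom C T A \<Longrightarrow> m \<cdot> x = m \<cdot> y \<Longrightarrow> x = y"
  shows "monic C m"
  unfolding monic_def
proof (intro conjI ballI impI)
  show "m \<in> Arr C"
    using assms(1) by (simp add: hom_iff)
  fix x y assume "x \<in> Arr C" "y \<in> Arr C" "Cod C x = Dom C m" "Cod C y = Dom C m"
    "Dom C x = Dom C y" "m \<cdot> x = m \<cdot> y"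
  then show "x = y"
    by (intro assms(2)[of x "Dom C x" y]) (use assms(1) in \<open>simp_all add: hom_iff\<close>)
qed

lemma monicD:
  assumes "monic C m" "m \<in> hom C A B" "x \<in> hom C T A" "y \<in> hom C T A" "m \<cdot> x = m \<cdot> y"
  shows "x = y"
proof -
  have "x \<in> Arr C" "y \<in> Arr C" "Cod C x = Dom C m" "Cod C y = Dom C m" "Dom C x = Dom C y"
    using assms(2-4) by (simp_all add: hom_iff)
  then show ?thesis
    using assms(1,5) unfolding monic_def by blast
qed

lemma productD:
  assumes "is_product C A B P p1 p2"
  shows "p1 \<in> hom C P A" "p2 \<in> hom C P B"
    "\<And>X f g. X \<in> Obj C \<Longrightarrow> f \<in> hom C X A \<Longrightarrow> g \<in> hom C X B \<Longrightarrow>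
        \<exists>!u. u \<in> hom C X P \<and> p1 \<cdot> u = f \<and> p2 \<cdot> u = g"
  using assms unfolding is_product_def by blast+

lemma product_ext:
  assumes "is_product C A B P p1 p2" "x \<in> hom C X P" "y \<in> hom C X P"
    and "p1 \<cdot> x = p1 \<cdot> y" "p2 \<cdot> x = p2 \<cdot> y"
  shows "x = y"
proof -
  note P = productD[OF assms(1)]
  have "X \<in> Obj C"
    using assms(2) hom_Obj by blast
  from P(3)[OF this Cp_hom[OF assms(2) P(1)] Cp_hom[OF assms(2) P(2)]]
  show ?thesis
    by (rule ex1_unique) (use assms(2-5) in auto)
qed

lemma pullbackD:
  assumes "is_pullback C f g P p1 p2" "f \<in> hom C A Z" "g \<in> hom C B Z"
  shows "p1 \<in> hom C P A" "p2 \<in> hom C P B" "f \<cdot> p1 = g \<cdot> p2"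
    and "\<And>X x y. X \<in> Obj C \<Longrightarrow> x \<in> hom C X A \<Longrightarrow> y \<in> hom C X B \<Longrightarrow> f \<cdot> x = g \<cdot> y \<Longrightarrow>
        \<exists>!u. u \<in> hom C X P \<and> p1 \<cdot> u = x \<and> p2 \<cdot> u = y"
proof -
  have "A = Dom C f" "B = Dom C g"
    using assms(2,3) by (simp_all add: hom_iff)
  then show "p1 \<in> hom C P A" "p2 \<in> hom C P B" "f \<cdot> p1 = g \<cdot> p2"
    "\<And>X x y. X \<in> Obj C \<Longrightarrow> x \<in> hom C X A \<Longrightarrow> y \<in> hom C X B \<Longrightarrow> f \<cdot> x = g \<cdot> y \<Longrightarrow>
        \<exists>!u. u \<in> hom C X P \<and> p1 \<cdot> u = x \<and> p2 \<cdot> u = y"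
    using assms(1) unfolding is_pullback_def by blast+
qed

lemma coequalizerD:
  assumes "is_coequalizer C f g q" "f \<in> hom C A B"
  shows "g \<in> hom C A B" "q \<in> hom C B (Cod C q)" "q \<cdot> f = q \<cdot> g"
    and "\<And>h Y. h \<in> hom C B Y \<Longrightarrow> h \<cdot> f = h \<cdot> g \<Longrightarrow> \<exists>!w. w \<in> hom C (Cod C q) Y \<and> w \<cdot> q = h"
proof -
  have AB: "Dom C f = A" "Cod C f = B"
    using assms(2) by (simp_all add: hom_iff)
  have co: "g \<in> Arr C" "Dom C g = Dom C f" "Cod C g = Cod C f" "q \<in> Arr C" "Dom C q = Cod C f"
      "q \<cdot> f = q \<cdot> g"
    using assms(1) by (simp_all add: is_coequalizer_def)
  have univ: "\<forall>h \<in> Arr C. Dom C h = Cod C f \<longrightarrow> h \<cdot> f = h \<cdot> g \<longrightarrow>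
        (\<exists>!w. w \<in> hom C (Cod C q) (Cod C h) \<and> w \<cdot> q = h)"
    using assms(1) unfolding is_coequalizer_def by (elim conjE) assumption
  show "g \<in> hom C A B" "q \<in> hom C B (Cod C q)" "q \<cdot> f = q \<cdot> g"
    using AB co by (simp_all add: hom_iff)
  fix h Y assume h: "h \<in> hom C B Y" "h \<cdot> f = h \<cdot> g"
  then have "h \<in> Arr C" "Dom C h = Cod C f" "Cod C h = Y"
    using AB by (simp_all add: hom_iff)
  moreover have "\<exists>!w. w \<in> hom C (Cod C q) (Cod C h) \<and> w \<cdot> q = h"
    using univ calculation(1,2) h(2) by blast
  ultimately show "\<exists>!w. w \<in> hom C (Cod C q) Y \<and> w \<cdot> q = h"
    by simp
qed

lemma zero_objectD:
  assumes "zero_object C Z" "X \<in> Obj C"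
  shows "\<exists>!f. f \<in> hom C Z X" "\<exists>!f. f \<in> hom C X Z"
  using assms unfolding zero_object_def is_initial_def is_terminal_def by blast+

lemma regular_epi_imp_epi:
  assumes "regular_epi C q"
  shows "epi C q"
proof -
  obtain f g where co: "is_coequalizer C f g q"
    using assms unfolding regular_epi_def by blast
  then obtain A B where f: "f \<in> hom C A B"
    by (auto simp: is_coequalizer_def hom_iff)
  note q = coequalizerD[OF co f]
  show ?thesis
  proof (rule epiI[OF q(2)])
    fix X x y assume x: "x \<in> hom C (Cod C q) X" and y: "y \<in> hom C (Cod C q) X" and xy: "x \<cdot> q = y \<cdot> q"
    have "(x \<cdot> q) \<cdot> f = (x \<cdot> q) \<cdot> g"
      using x q(1-3) f by (simp add: hom_iff)
    from q(4)[OF Cp_hom[OF q(2) x] this] show "x = y"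
      by (rule ex1_unique) (use x y xy in auto)
  qed
qed

lemma product_exists:
  assumes "finitely_complete C" "A \<in> Obj C" "B \<in> Obj C"
  shows "\<exists>P p1 p2. is_product C A B P p1 p2"
proof -
  obtain T where "is_terminal C T"
    using assms(1) unfolding finitely_complete_def by blast
  then have to_T: "\<And>X. X \<in> Obj C \<Longrightarrow> \<exists>!t. t \<in> hom C X T"
    by (simp add: is_terminal_def)
  obtain a b where a: "a \<in> hom C A T" and b: "b \<in> hom C B T"
    using to_T assms(2,3) by blast
  have "a \<in> Arr C" "b \<in> Arr C" "Cod C a = Cod C b"
    using a b by (simp_all add: hom_iff)
  then obtain P p1 p2 where pb: "is_pullback C a b P p1 p2"
    using assms(1) unfolding finitely_complete_def by blast
  note P = pullbackD[OF pb a b]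
  have "is_product C A B P p1 p2" unfolding is_product_def
  proof (intro conjI ballI)
    fix X f g assume X: "X \<in> Obj C" and f: "f \<in> hom C X A" and g: "g \<in> hom C X B"
    have "a \<cdot> f = b \<cdot> g"
      using to_T[OF X] Cp_hom[OF f a] Cp_hom[OF g b] by blast
    then show "\<exists>!u. u \<in> hom C X P \<and> p1 \<cdot> u = f \<and> p2 \<cdot> u = g"
      using P(4)[OF X f g] by blast
  qed (use P(1,2) in blast)+
  then show ?thesis by blast
qed

lemma regular_epi_pullback_cover:
  assumes "regular_cat C" "regular_epi C p" "p \<in> hom C A I" "x \<in> hom C T I"
  obtains P a t where "a \<in> hom C P A" "t \<in> hom C P T" "p \<cdot> a = x \<cdot> t" "epi C t"
proof -
  have "p \<in> Arr C" "x \<in> Arr C" "Cod C p = Cod C x"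
    using assms(3,4) by (simp_all add: hom_iff)
  then obtain P a t where pb: "is_pullback C p x P a t"
    using assms(1) unfolding regular_cat_def finitely_complete_def by blast
  then have "regular_epi C t"
    using assms(1,2) unfolding regular_cat_def by blast
  with pullbackD(1-3)[OF pb assms(3,4)] regular_epi_imp_epi that show ?thesis
    by blast
qed

lemma kernel_pair_coequalizer_factor_monic:
  assumes reg: "regular_cat C" and kp: "kernel_pair C (m \<cdot> p) K k1 k2"
    and co: "is_coequalizer C k1 k2 p" and p: "p \<in> hom C A I" and m: "m \<in> hom C I B"
  shows "monic C m"
proof (rule monicI[OF m])
  txt \<open>Lift \<open>x\<close> and \<open>y\<close> along the regular epi \<open>p\<close>, after pulling back twice; the lifts
    then land in the kernel pair of \<open>m p\<close>, which \<open>p\<close> coequalizes.\<close>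
  fix T x y assume x: "x \<in> hom C T I" and y: "y \<in> hom C T I" and mxy: "m \<cdot> x = m \<cdot> y"
  have u: "m \<cdot> p \<in> hom C A B"
    using Cp_hom[OF p m] .
  note K = pullbackD[OF kp[unfolded kernel_pair_def] u u]
  have p_reg: "regular_epi C p"
    using co unfolding regular_epi_def by blast
  obtain P1 a t1 where a: "a \<in> hom C P1 A" and t1: "t1 \<in> hom C P1 T"
    and pa: "p \<cdot> a = x \<cdot> t1" and "epi C t1"
    using regular_epi_pullback_cover[OF reg p_reg p x] .
  obtain P2 b t2 where b: "b \<in> hom C P2 A" and t2: "t2 \<in> hom C P2 P1"
    and pb: "p \<cdot> b = (y \<cdot> t1) \<cdot> t2" and "epi C t2"
    using regular_epi_pullback_cover[OF reg p_reg p Cp_hom[OF t1 y]] .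
  have "(m \<cdot> p) \<cdot> a \<cdot> t2 = m \<cdot> x \<cdot> t1 \<cdot> t2"
    using precompose_eq[OF pa t2 a p t1 x] a t2 p m by (simp add: hom_iff)
  also have "\<dots> = m \<cdot> y \<cdot> t1 \<cdot> t2"
    using precompose_eq[OF mxy Cp_hom[OF t2 t1] x m y m] .
  also have "\<dots> = (m \<cdot> p) \<cdot> b"
    using pb[symmetric] b t1 t2 y p m by (simp add: hom_iff)
  finally have "(m \<cdot> p) \<cdot> a \<cdot> t2 = (m \<cdot> p) \<cdot> b" .
  then obtain w where w: "w \<in> hom C P2 K" "k1 \<cdot> w = a \<cdot> t2" "k2 \<cdot> w = b"
    using K(4)[OF _ Cp_hom[OF t2 a] b] hom_Obj[OF b] by blast
  have "p \<cdot> k1 \<cdot> w = p \<cdot> k2 \<cdot> w"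
    using precompose_eq[OF coequalizerD(3)[OF co K(1)] w(1) K(1) p K(2) p] .
  then have "p \<cdot> a \<cdot> t2 = p \<cdot> b"
    using w K(1,2) p by (simp add: hom_iff)
  then have "(x \<cdot> t1) \<cdot> t2 = (y \<cdot> t1) \<cdot> t2"
    using precompose_eq[OF pa t2 a p t1 x] pb x t1 t2 by (simp add: hom_iff)
  then have "x \<cdot> t1 = y \<cdot> t1"
    using epiD[OF \<open>epi C t2\<close> t2 Cp_hom[OF t1 x] Cp_hom[OF t1 y]] by simp
  then show "x = y"
    using epiD[OF \<open>epi C t1\<close> t1 x y] by simp
qed

lemma image_factorization:
  assumes reg: "regular_cat C" and u: "u \<in> hom C A B"
  obtains I p m K k1 k2 where "p \<in> hom C A I" "m \<in> hom C I B" "u = m \<cdot> p" "monic C m"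
    "kernel_pair C u K k1 k2" "is_coequalizer C k1 k2 p"
proof -
  have "u \<in> Arr C"
    using u by (simp add: hom_iff)
  then obtain K k1 k2 where kp: "kernel_pair C u K k1 k2"
    using reg unfolding regular_cat_def finitely_complete_def kernel_pair_def by blast
  then obtain p where co: "is_coequalizer C k1 k2 p"
    using reg unfolding regular_cat_def by blast
  note K = pullbackD[OF kp[unfolded kernel_pair_def] u u]
  note P = coequalizerD[OF co K(1)]
  obtain m where m: "m \<in> hom C (Cod C p) B" "m \<cdot> p = u"
    using P(4)[OF u K(3)] by blast
  have "monic C m"
    using kernel_pair_coequalizer_factor_monic[OF reg _ co P(2) m(1)] kp m(2) by simp
  with P(2) m kp co that show ?thesis
    by simp
qed

lemma monic_section_inverse:
  assumes "monic C m" "m \<in> hom C I B" "n \<in> hom C B I" "m \<cdot> n = Idt C B"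
  shows "n \<cdot> m = Idt C I"
proof (rule monicD[OF assms(1,2) Cp_hom[OF assms(2,3)]])
  have "I \<in> Obj C"
    using hom_Obj[OF assms(2)] by blast
  then show "Idt C I \<in> hom C I I"
    by (rule Idt_hom)
  have "m \<cdot> n \<cdot> m = (m \<cdot> n) \<cdot> m"
    using assms(2,3) by (simp add: hom_iff)
  then show "m \<cdot> n \<cdot> m = m \<cdot> Idt C I"
    using assms(2,4) hom_Obj[OF assms(2)] by (simp add: hom_iff)
qed

lemma coequalizer_postcompose_iso:
  assumes co: "is_coequalizer C k1 k2 p" and k1: "k1 \<in> hom C K A" and p: "p \<in> hom C A I"
    and m: "m \<in> hom C I B" and n: "n \<in> hom C B I"
    and nm: "n \<cdot> m = Idt C I" and mn: "m \<cdot> n = Idt C B"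
  shows "is_coequalizer C k1 k2 (m \<cdot> p)"
  unfolding is_coequalizer_def
proof (intro conjI ballI impI)
  note P = coequalizerD[OF co k1]
  have I: "I \<in> Obj C" and B: "B \<in> Obj C"
    using hom_Obj[OF m] by simp_all
  show "k1 \<in> Arr C" "k2 \<in> Arr C" "Dom C k1 = Dom C k2" "Cod C k1 = Cod C k2"
    "m \<cdot> p \<in> Arr C" "Dom C (m \<cdot> p) = Cod C k1"
    using k1 P(1) p m by (simp_all add: hom_iff)
  show "(m \<cdot> p) \<cdot> k1 = (m \<cdot> p) \<cdot> k2"
    using k1 P(1,3) p m by (simp add: hom_iff)
  fix h assume "h \<in> Arr C" "Dom C h = Cod C k1" and hk: "h \<cdot> k1 = h \<cdot> k2"
  then obtain Y where h: "h \<in> hom C A Y"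
    using k1 by (simp add: hom_iff)
  have "Cod C p = I"
    using p by (simp add: hom_iff)
  then obtain w where w: "w \<in> hom C I Y" "w \<cdot> p = h"
    and w_unique: "\<And>v. v \<in> hom C I Y \<Longrightarrow> v \<cdot> p = h \<Longrightarrow> v = w"
    using P(4)[OF h hk] by metis
  have Cods: "Cod C (m \<cdot> p) = B" "Cod C h = Y"
    using p m h by (simp_all add: hom_iff)
  show "\<exists>!v. v \<in> hom C (Cod C (m \<cdot> p)) (Cod C h) \<and> v \<cdot> m \<cdot> p = h"
    unfolding Cods
  proof (rule ex1I[of _ "w \<cdot> n"])
    have "(w \<cdot> n) \<cdot> m \<cdot> p = w \<cdot> (n \<cdot> m) \<cdot> p"
      using w(1) n m p by (simp add: hom_iff)
    then show "w \<cdot> n \<in> hom C B Y \<and> (w \<cdot> n) \<cdot> m \<cdot> p = h"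
      using Cp_hom[OF n w(1)] w p I nm by (simp add: hom_iff)
    fix v assume v: "v \<in> hom C B Y \<and> v \<cdot> m \<cdot> p = h"
    then have "v \<cdot> m = w"
      using w_unique[of "v \<cdot> m"] Cp_hom[OF m] m p by (simp add: hom_iff)
    moreover have "(v \<cdot> m) \<cdot> n = v"
      using v m n mn B by (simp add: hom_iff)
    ultimately show "v = w \<cdot> n"
      by simp
  qed
qed

lemma initial_imp_zero_object:
  assumes "pointed C" "is_initial C Q"
  shows "zero_object C Q"
proof -
  obtain Z where Z: "zero_object C Z"
    using assms(1) unfolding pointed_def by blast
  have Q: "Q \<in> Obj C" and from_Q: "\<And>X. X \<in> Obj C \<Longrightarrow> \<exists>!f. f \<in> hom C Q X"
    using assms(2) unfolding is_initial_def by blast+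
  obtain s t where s: "s \<in> hom C Z Q" and t: "t \<in> hom C Q Z"
    using zero_objectD[OF Z Q] by blast
  have st: "s \<cdot> t = Idt C Q"
    using from_Q[OF Q] Cp_hom[OF t s] Idt_hom[OF Q] by (rule ex1_unique)
  have "is_terminal C Q"
    unfolding is_terminal_def
  proof (intro conjI ballI)
    fix X assume X: "X \<in> Obj C"
    obtain k where k: "k \<in> hom C X Z"
      using zero_objectD[OF Z X] by blast
    show "\<exists>!f. f \<in> hom C X Q"
    proof (rule ex1I[of _ "s \<cdot> k"])
      show "s \<cdot> k \<in> hom C X Q"
        using Cp_hom[OF k s] .
      fix a assume a: "a \<in> hom C X Q"
      have ta: "t \<cdot> a = t \<cdot> s \<cdot> k"
        using zero_objectD(2)[OF Z X] Cp_hom[OF a t] Cp_hom[OF Cp_hom[OF k s] t] by (rule ex1_unique)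
      have "a = (s \<cdot> t) \<cdot> a"
        using st a Q by (simp add: hom_iff)
      also have "\<dots> = (s \<cdot> t) \<cdot> s \<cdot> k"
        using ta a s t k by (simp add: hom_iff)
      also have "\<dots> = s \<cdot> k"
        using st s k Q by (simp add: hom_iff)
      finally show "a = s \<cdot> k" .
    qed
  qed (fact Q)
  with assms(2) show ?thesis
    unfolding zero_object_def by blast
qed

lemma eq_on_projections_factors_through_zero:
  assumes "pointed C" "is_product C A A P p1 p2" "i \<in> hom C A Q" "i \<cdot> p1 = i \<cdot> p2"
  obtains Z h z where "zero_object C Z" "h \<in> hom C A Z" "z \<in> hom C Z Q" "i = z \<cdot> h"
proof -
  obtain Z where Z: "zero_object C Z"
    using assms(1) unfolding pointed_def by blast
  note P = productD[OF assms(2)]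
  have A: "A \<in> Obj C"
    using hom_Obj[OF assms(3)] by blast
  obtain h g where h: "h \<in> hom C A Z" and g: "g \<in> hom C Z A"
    using zero_objectD[OF Z A] by blast
  obtain v where v: "v \<in> hom C A P" "p1 \<cdot> v = Idt C A" "p2 \<cdot> v = g \<cdot> h"
    using P(3)[OF A Idt_hom[OF A] Cp_hom[OF h g]] by blast
  have "i = i \<cdot> p1 \<cdot> v"
    using v(2) assms(3) A by (simp add: hom_iff)
  also have "\<dots> = i \<cdot> p2 \<cdot> v"
    using precompose_eq[OF assms(4) v(1) P(1) assms(3) P(2) assms(3)] .
  also have "\<dots> = (i \<cdot> g) \<cdot> h"
    using v(3) assms(3) g h by (simp add: hom_iff)
  finally show ?thesis
    using that[OF Z h Cp_hom[OF g assms(3)]] by blast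
qed

lemma exact_maltsev_reflexive_rel_kernel_pair:
  assumes "exact_cat C" "maltsev C" "reflexive_rel C X R r1 r2"
  obtains f Y where "f \<in> hom C X Y" "kernel_pair C f R r1 r2"
proof -
  have "equivalence_rel C X R r1 r2"
    using assms(2,3) unfolding maltsev_def by blast
  then obtain f where kp: "kernel_pair C f R r1 r2"
    using assms(1) unfolding exact_cat_def by blast
  have "r1 \<in> hom C R X"
    using assms(3) unfolding reflexive_rel_def is_relation_def by blast
  with kp have "f \<in> hom C X (Cod C f)"
    unfolding kernel_pair_def is_pullback_def by (simp add: hom_iff)
  with kp that show ?thesis
    by blast
qed

end

locale reflexive_graph = category +
  fixes C0 C1 d c e
  assumes d: "d \<in> hom C C1 C0" and c: "c \<in> hom C C1 C0" and e: "e \<in> hom C C0 C1"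
    and de: "d \<cdot> e = Idt C C0" and ce: "c \<cdot> e = Idt C C0"
begin

lemma C0_Obj: "C0 \<in> Obj C" and C1_Obj: "C1 \<in> Obj C"
  using hom_Obj[OF d] by blast+

lemma cocone_legs_eq:
  assumes x: "x \<in> hom C C0 X" and y: "y \<in> hom C C0 X" and xy: "x \<cdot> d = y \<cdot> c"
  shows "x = y"
proof -
  have "x = x \<cdot> d \<cdot> e"
    using de x C0_Obj by (simp add: hom_iff)
  also have "\<dots> = y \<cdot> c \<cdot> e"
    using precompose_eq[OF xy e d x c y] .
  also have "\<dots> = y"
    using ce y C0_Obj by (simp add: hom_iff)
  finally show ?thesis .
qed

lemma pushoutD:
  assumes "is_pushout C d c Q i1 i2"
  shows "i2 = i1" "i1 \<in> hom C C0 Q" "i1 \<cdot> d = i1 \<cdot> c"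
    and "\<And>X x. X \<in> Obj C \<Longrightarrow> x \<in> hom C C0 X \<Longrightarrow> x \<cdot> d = x \<cdot> c \<Longrightarrow>
        \<exists>!w. w \<in> hom C Q X \<and> w \<cdot> i1 = x"
proof -
  have cod: "Cod C d = C0" "Cod C c = C0"
    using d c by (simp_all add: hom_iff)
  have i: "i1 \<in> hom C C0 Q" "i2 \<in> hom C C0 Q" "i1 \<cdot> d = i2 \<cdot> c"
    and univ: "\<And>X x y. X \<in> Obj C \<Longrightarrow> x \<in> hom C C0 X \<Longrightarrow> y \<in> hom C C0 X \<Longrightarrow> x \<cdot> d = y \<cdot> c \<Longrightarrow>
        \<exists>!w. w \<in> hom C Q X \<and> w \<cdot> i1 = x \<and> w \<cdot> i2 = y"
    using assms unfolding is_pushout_def cod by blast+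
  show i21: "i2 = i1"
    using cocone_legs_eq[OF i(1,2,3)] by simp
  show "i1 \<in> hom C C0 Q" "i1 \<cdot> d = i1 \<cdot> c"
    using i i21 by simp_all
  fix X x assume "X \<in> Obj C" "x \<in> hom C C0 X" "x \<cdot> d = x \<cdot> c"
  then show "\<exists>!w. w \<in> hom C Q X \<and> w \<cdot> i1 = x"
    using univ[of X x x] i21 by simp
qed

lemma pushoutI:
  assumes q: "q \<in> hom C C0 Q" and qdc: "q \<cdot> d = q \<cdot> c"
    and univ: "\<And>X x. X \<in> Obj C \<Longrightarrow> x \<in> hom C C0 X \<Longrightarrow> x \<cdot> d = x \<cdot> c \<Longrightarrow>
        \<exists>!w. w \<in> hom C Q X \<and> w \<cdot> q = x"
  shows "is_pushout C d c Q q q"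
  unfolding is_pushout_def
proof (intro conjI ballI impI)
  have cod: "Cod C d = C0" "Cod C c = C0"
    using d c by (simp_all add: hom_iff)
  show "d \<in> Arr C" "c \<in> Arr C" "Dom C d = Dom C c"
    using d c by (simp_all add: hom_iff)
  show "q \<in> hom C (Cod C d) Q" "q \<in> hom C (Cod C c) Q" "q \<cdot> d = q \<cdot> c"
    using q qdc cod by simp_all
  fix X x y assume X: "X \<in> Obj C" and x: "x \<in> hom C (Cod C d) X" and y: "y \<in> hom C (Cod C c) X"
    and xy: "x \<cdot> d = y \<cdot> c"
  have x': "x \<in> hom C C0 X" and y': "y \<in> hom C C0 X"
    using x y cod by simp_all
  have "x = y"
    using cocone_legs_eq[OF x' y' xy] .
  then show "\<exists>!w. w \<in> hom C Q X \<and> w \<cdot> q = x \<and> w \<cdot> q = y"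
    using univ[OF X x'] xy by simp
qed

lemma pushout_initial_if_factors_through_zero:
  assumes po: "is_pushout C d c Q i1 i2" and Z: "zero_object C Z"
    and h: "h \<in> hom C C0 Z" and z: "z \<in> hom C Z Q" and i1: "i1 = z \<cdot> h"
  shows "is_initial C Q"
  unfolding is_initial_def
proof (intro conjI ballI)
  note P = pushoutD[OF po]
  show "Q \<in> Obj C"
    using hom_Obj[OF z] by blast
  fix X assume X: "X \<in> Obj C"
  have "h \<cdot> d = h \<cdot> c"
    using zero_objectD(2)[OF Z C1_Obj] Cp_hom[OF d h] Cp_hom[OF c h]
    by (rule ex1_unique)
  obtain k where k: "k \<in> hom C Z X"
    using zero_objectD(1)[OF Z X] by blast
  have "(k \<cdot> h) \<cdot> d = (k \<cdot> h) \<cdot> c"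
    using \<open>h \<cdot> d = h \<cdot> c\<close> k h d c by (simp add: hom_iff)
  then obtain w where w: "w \<in> hom C Q X"
    using P(4)[OF X Cp_hom[OF h k]] by blast
  show "\<exists>!f. f \<in> hom C Q X"
  proof (rule ex1I[of _ w])
    fix a assume a: "a \<in> hom C Q X"
    have az: "a \<cdot> z = w \<cdot> z"
      using zero_objectD(1)[OF Z X] Cp_hom[OF z a] Cp_hom[OF z w] by (rule ex1_unique)
    have "(a \<cdot> i1) \<cdot> d = (a \<cdot> i1) \<cdot> c"
      using P(2,3) a d c by (simp add: hom_iff)
    moreover have "a \<cdot> i1 = w \<cdot> i1"
      using precompose_eq[OF az h z a z w] i1 by simp
    ultimately show "a = w"
      using ex1_unique[OF P(4)[OF X Cp_hom[OF P(2) a]]] a w by simp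
  qed (fact w)
qed

lemma image_reflexive_relation:
  assumes P: "is_product C C0 C0 P p1 p2" and p: "p \<in> hom C C1 I" and m: "m \<in> hom C I P"
    and "monic C m" and d_eq: "p1 \<cdot> m \<cdot> p = d" and c_eq: "p2 \<cdot> m \<cdot> p = c"
  shows "reflexive_rel C C0 I (p1 \<cdot> m) (p2 \<cdot> m)"
proof -
  note PP = productD[OF P]
  have r: "p1 \<cdot> m \<in> hom C I C0" "p2 \<cdot> m \<in> hom C I C0"
    using Cp_hom[OF m PP(1)] Cp_hom[OF m PP(2)] .
  have "is_relation C C0 I (p1 \<cdot> m) (p2 \<cdot> m)"
    unfolding is_relation_def
  proof (intro conjI ballI impI r)
    fix x y assume "x \<in> Arr C" "y \<in> Arr C" "Cod C x = I" "Cod C y = I" "Dom C x = Dom C y"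
      and xy: "(p1 \<cdot> m) \<cdot> x = (p1 \<cdot> m) \<cdot> y" "(p2 \<cdot> m) \<cdot> x = (p2 \<cdot> m) \<cdot> y"
    then obtain T where x: "x \<in> hom C T I" and y: "y \<in> hom C T I"
      by (simp add: hom_iff)
    have "m \<cdot> x = m \<cdot> y"
      using product_ext[OF P Cp_hom[OF x m] Cp_hom[OF y m]] xy x y m PP(1,2)
      by (simp add: hom_iff)
    then show "x = y"
      using monicD[OF \<open>monic C m\<close> m x y] by simp
  qed
  moreover have "(p1 \<cdot> m) \<cdot> p \<cdot> e = (p1 \<cdot> m \<cdot> p) \<cdot> e" "(p2 \<cdot> m) \<cdot> p \<cdot> e = (p2 \<cdot> m \<cdot> p) \<cdot> e"
    using e p m PP(1,2) by (simp_all add: hom_iff)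
  ultimately show ?thesis
    unfolding reflexive_rel_def using Cp_hom[OF e p] d_eq c_eq de ce by auto
qed

lemma epi_imp_pushout_zero:
  assumes pt: "pointed C" and po: "is_pushout C d c Q i1 i2" and P: "is_product C C0 C0 P p1 p2"
    and u: "u \<in> hom C C1 P" and ud: "p1 \<cdot> u = d" and uc: "p2 \<cdot> u = c" and "epi C u"
  shows "zero_object C Q"
proof -
  note PO = pushoutD[OF po]
  note PP = productD[OF P]
  have "(i1 \<cdot> p1) \<cdot> u = (i1 \<cdot> p2) \<cdot> u"
    using PO(2,3) PP(1,2) u ud uc by (simp add: hom_iff)
  then have "i1 \<cdot> p1 = i1 \<cdot> p2"
    using epiD[OF \<open>epi C u\<close> u Cp_hom[OF PP(1) PO(2)] Cp_hom[OF PP(2) PO(2)]] by simp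
  then obtain Z h z where "zero_object C Z" "h \<in> hom C C0 Z" "z \<in> hom C Z Q" "i1 = z \<cdot> h"
    using eq_on_projections_factors_through_zero[OF pt P PO(2)] by blast
  then have "is_initial C Q"
    by (rule pushout_initial_if_factors_through_zero[OF po])
  with pt show ?thesis
    by (rule initial_imp_zero_object)
qed

lemma image_kernel_pair:
  assumes ex: "exact_cat C" and mal: "maltsev C" and P: "is_product C C0 C0 P p1 p2"
    and u: "u \<in> hom C C1 P" and ud: "p1 \<cdot> u = d" and uc: "p2 \<cdot> u = c"
  obtains I p m K k1 k2 f W where "p \<in> hom C C1 I" "m \<in> hom C I P" "u = m \<cdot> p" "monic C m"
    "kernel_pair C u K k1 k2" "is_coequalizer C k1 k2 p"
    "f \<in> hom C C0 W" "kernel_pair C f I (p1 \<cdot> m) (p2 \<cdot> m)"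
proof -
  have reg: "regular_cat C"
    using ex unfolding exact_cat_def by (rule conjunct1)
  obtain I p m K k1 k2 where im: "p \<in> hom C C1 I" "m \<in> hom C I P" "u = m \<cdot> p" "monic C m"
    "kernel_pair C u K k1 k2" "is_coequalizer C k1 k2 p"
    by (rule image_factorization[OF reg u])
  have "reflexive_rel C C0 I (p1 \<cdot> m) (p2 \<cdot> m)"
    using image_reflexive_relation[OF P im(1,2,4) ud[unfolded im(3)] uc[unfolded im(3)]] .
  then obtain f W where "f \<in> hom C C0 W" "kernel_pair C f I (p1 \<cdot> m) (p2 \<cdot> m)"
    by (rule exact_maltsev_reflexive_rel_kernel_pair[OF ex mal])
  then show ?thesis
    by (rule that[OF im])
qed

lemma pushout_exists:
  assumes ex: "exact_cat C" and mal: "maltsev C"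
  shows "\<exists>Q i1 i2. is_pushout C d c Q i1 i2"
proof -
  have reg: "regular_cat C"
    using ex unfolding exact_cat_def by (rule conjunct1)
  then obtain P p1 p2 where P: "is_product C C0 C0 P p1 p2"
    using product_exists[OF _ C0_Obj C0_Obj] unfolding regular_cat_def by blast
  note PP = productD[OF P]
  obtain u where u: "u \<in> hom C C1 P" "p1 \<cdot> u = d" "p2 \<cdot> u = c"
    using PP(3)[OF C1_Obj d c] by blast
  obtain I p m K k1 k2 f W where im: "p \<in> hom C C1 I" "m \<in> hom C I P" "u = m \<cdot> p"
    "is_coequalizer C k1 k2 p" and kp: "kernel_pair C f I (p1 \<cdot> m) (p2 \<cdot> m)"
    using image_kernel_pair[OF ex mal P u] by metis
  have r: "p1 \<cdot> m \<in> hom C I C0" "p2 \<cdot> m \<in> hom C I C0"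
    using Cp_hom[OF im(2) PP(1)] Cp_hom[OF im(2) PP(2)] .
  obtain q where co: "is_coequalizer C (p1 \<cdot> m) (p2 \<cdot> m) q"
    using reg kp unfolding regular_cat_def by blast
  note Q = coequalizerD[OF co r(1)]
  have "epi C p"
    using im(4) regular_epi_imp_epi unfolding regular_epi_def by blast
  have dc: "d = (p1 \<cdot> m) \<cdot> p" "c = (p2 \<cdot> m) \<cdot> p"
    using u(2,3) im(1-3) PP(1,2) by (simp_all add: hom_iff)
  have "is_pushout C d c (Cod C q) q q"
  proof (rule pushoutI[OF Q(2)])
    show "q \<cdot> d = q \<cdot> c"
      using precompose_eq[OF Q(3) im(1) r(1) Q(2) r(2) Q(2)] dc by simp
    fix X x assume "X \<in> Obj C" and x: "x \<in> hom C C0 X" and xdc: "x \<cdot> d = x \<cdot> c"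
    then have "(x \<cdot> p1 \<cdot> m) \<cdot> p = (x \<cdot> p2 \<cdot> m) \<cdot> p"
      using dc im(1,2) PP(1,2) by (simp add: hom_iff)
    then have "x \<cdot> p1 \<cdot> m = x \<cdot> p2 \<cdot> m"
      using epiD[OF \<open>epi C p\<close> im(1) Cp_hom[OF r(1) x] Cp_hom[OF r(2) x]] by simp
    then show "\<exists>!w. w \<in> hom C (Cod C q) X \<and> w \<cdot> q = x"
      using Q(4)[OF x] by simp
  qed
  then show ?thesis
    by blast
qed

lemma pushout_zero_imp_regular_epi:
  assumes ex: "exact_cat C" and mal: "maltsev C"
    and po: "is_pushout C d c Q i1 i2" and P: "is_product C C0 C0 P p1 p2"
    and u: "u \<in> hom C C1 P" and ud: "p1 \<cdot> u = d" and uc: "p2 \<cdot> u = c"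
    and "zero_object C Q"
  shows "regular_epi C u"
proof -
  obtain I p m K k1 k2 f W where im: "p \<in> hom C C1 I" "m \<in> hom C I P" "u = m \<cdot> p" "monic C m"
    "kernel_pair C u K k1 k2" "is_coequalizer C k1 k2 p"
    and f: "f \<in> hom C C0 W" and kp: "kernel_pair C f I (p1 \<cdot> m) (p2 \<cdot> m)"
    by (rule image_kernel_pair[OF ex mal P u ud uc])
  note PO = pushoutD[OF po]
  note PP = productD[OF P]
  note F = pullbackD[OF kp[unfolded kernel_pair_def] f f]
  note K = pullbackD[OF im(5)[unfolded kernel_pair_def] u u]
  have P_obj: "P \<in> Obj C"
    using hom_Obj[OF u] by blast
  have "f \<cdot> p1 \<cdot> m \<cdot> p = f \<cdot> p2 \<cdot> m \<cdot> p"
    using precompose_eq[OF F(3) im(1) F(1) f F(2) f] im(1,2) PP(1,2) f by (simp add: hom_iff)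
  then have "f \<cdot> d = f \<cdot> c"
    using ud uc im(3) by simp
  then obtain w where w: "w \<in> hom C Q W" "w \<cdot> i1 = f"
    using PO(4)[OF hom_Obj[OF f, THEN conjunct2] f] by blast
  have "i1 \<cdot> p1 = i1 \<cdot> p2"
    using zero_objectD(2)[OF \<open>zero_object C Q\<close> P_obj] Cp_hom[OF PP(1) PO(2)] Cp_hom[OF PP(2) PO(2)]
    by (rule ex1_unique)
  then have "f \<cdot> p1 = f \<cdot> p2"
    using w(1) w(2)[symmetric] PO(2) PP(1,2) by (simp add: hom_iff)
  then obtain n where n: "n \<in> hom C P I" "(p1 \<cdot> m) \<cdot> n = p1" "(p2 \<cdot> m) \<cdot> n = p2"
    using F(4)[OF P_obj PP(1,2)] by blast
  have mn: "m \<cdot> n = Idt C P"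
    using product_ext[OF P Cp_hom[OF n(1) im(2)] Idt_hom[OF P_obj]] n im(2) PP(1,2) P_obj
    by (simp add: hom_iff)
  have nm: "n \<cdot> m = Idt C I"
    using monic_section_inverse[OF im(4,2) n(1) mn] .
  have "is_coequalizer C k1 k2 (m \<cdot> p)"
    using coequalizer_postcompose_iso[OF im(6) K(1) im(1,2) n(1) nm mn] .
  then show ?thesis
    unfolding regular_epi_def im(3) by blast
qed

end

theorem mainTheorem7:
  fixes C :: "('o, 'a) cat"
    and C0 C1 :: 'o and d c e :: 'a
  assumes "is_category C"
    and "pointed C" and "exact_cat C" and "maltsev C"
    and "C0 \<in> Obj C" and "C1 \<in> Obj C"
    and "d \<in> hom C C1 C0" and "c \<in> hom C C1 C0" and "e \<in> hom C C0 C1"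
    and "Cp C d e = Idt C C0" and "Cp C c e = Idt C C0"
  shows "(\<exists>Q i1 i2. is_pushout C d c Q i1 i2) \<and>
         (\<forall>Q i1 i2 P p1 p2 u.
            is_pushout C d c Q i1 i2 \<longrightarrow> is_product C C0 C0 P p1 p2 \<longrightarrow>
            u \<in> hom C C1 P \<longrightarrow> Cp C p1 u = d \<longrightarrow> Cp C p2 u = c \<longrightarrow>
            ((epi C u \<longleftrightarrow> zero_object C Q) \<and> (epi C u \<longrightarrow> regular_epi C u)))"
proof -
  interpret reflexive_graph C C0 C1 d c e
    using assms by (simp add: reflexive_graph_def reflexive_graph_axioms_def category_def)
  show ?thesis
  proof (intro conjI allI impI)
    show "\<exists>Q i1 i2. is_pushout C d c Q i1 i2"
      using pushout_exists[OF assms(3,4)] .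
    fix Q i1 i2 P p1 p2 u
    assume po: "is_pushout C d c Q i1 i2" and P: "is_product C C0 C0 P p1 p2"
      and u: "u \<in> hom C C1 P" "p1 \<cdot> u = d" "p2 \<cdot> u = c"
    have "epi C u \<Longrightarrow> zero_object C Q"
      using epi_imp_pushout_zero[OF assms(2) po P u] .
    moreover have "zero_object C Q \<Longrightarrow> regular_epi C u"
      using pushout_zero_imp_regular_epi[OF assms(3,4) po P u] .
    ultimately show "epi C u \<longleftrightarrow> zero_object C Q" "epi C u \<Longrightarrow> regular_epi C u"
      using regular_epi_imp_epi by blast+
  qed
qed

end
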